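(* Let $(S,E,f)$ be a reduced and closed observation table for $U$ and $D$ as defined below, and suppose the marking of $\mathcal{T}_{S,f}$ fails. Then there are $s,t\in S$, $z,w\in\Sigma^*$ with $\delta_f^*(\epsilon,sz)=t$ and $\delta_f^*(\epsilon,tw)=s$, and nonempty $x,y\in\Sigma^+$ with $x^\omega,y^\omega\in E$, $s\in\mathrm{Inf}_{\mathcal{T}_{S,f}}(sx^\omega)$ and $t\in\mathrm{Inf}_{\mathcal{T}_{S,f}}(ty^\omega)$, such that $f(s,x^\omega)=\text{yes}$ and $f(t,y^\omega)=\text{no}$.
   Context: $\Sigma$ is a finite alphabet, $U\subseteq\Sigma^\omega$ recognizable by a weak deterministic Büchi automaton, $D\subseteq\Sigma^\omega$ regular with trivial right-congruence (for all $w\in\Sigma^*,\alpha$: $\alpha\in D\iff w\alpha\in D$). An observation table $(S,E,f)$ consists of a prefix-closed finite $S\subseteq\Sigma^*$, a suffix-closed finite set $E$ of ultimately periodic words with $E\cap D=\emptyset$, and $f:(S\cup S\Sigma)\times E\to\{\text{yes},\text{no}\}$ with $f(s,\alpha)=\text{yes}$ iff $s\alpha\in U$; $f_s(\alpha)=f(s,\alpha)$. Reduced: $f_s\neq f_t$ for distinct $s,t\in S$; closed: every $s\in S\Sigma$ has $t\in S$ with $f_s=f_t$. $\mathcal{T}_{S,f}=(\Sigma,S,\delta_f,\epsilon)$ with $\delta_f(s,\sigma)$ the unique $t\in S$ with $f_{s\sigma}=f_t$; $\delta_f^*$ is its extension to words; $\mathrm{Inf}_{\mathcal{T}_{S,f}}(\beta)$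 is the set of states visited infinitely often by the run of $\beta$ from $\epsilon$. Marking: for each $\alpha\in S\cdot E$, every state in $\mathrm{Inf}_{\mathcal{T}_{S,f}}(\alpha)$ is marked "yes" if $\alpha\in U$ and "no" if $\alpha\notin U$. The marking fails iff there are states $s,t$ (possibly equal) in the same maximal strongly connected component of $\mathcal{T}_{S,f}$ such that $s$ is marked "yes" and $t$ is marked "no". *)

theory Defs
  imports Main "HOL-Library.Omega_Words_Fun"
begin

(* Alphabet Sigma = the finite type 'a; finite words = 'a list; omega-words = 'a word. *)

definition dstep_star :: "('q \<Rightarrow> 'a \<Rightarrow> 'q) \<Rightarrow> 'q \<Rightarrow> 'a list \<Rightarrow> 'q" where
  "dstep_star \<delta> q w = foldl \<delta> q w"

definition drun :: "('q \<Rightarrow> 'a \<Rightarrow> 'q) \<Rightarrow> 'q \<Rightarrow> 'a word \<Rightarrow> 'q word" where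
  "drun \<delta> q \<alpha> = (\<lambda>n. dstep_star \<delta> q (prefix n \<alpha>))"

definition dInf :: "('q \<Rightarrow> 'a \<Rightarrow> 'q) \<Rightarrow> 'q \<Rightarrow> 'a word \<Rightarrow> 'q set" where
  "dInf \<delta> q \<alpha> = limit (drun \<delta> q \<alpha>)"

definition weak_dba :: "nat set \<Rightarrow> nat \<Rightarrow> (nat \<Rightarrow> 'a \<Rightarrow> nat) \<Rightarrow> nat set \<Rightarrow> bool" where
  "weak_dba Q q0 \<delta> F \<longleftrightarrow> finite Q \<and> q0 \<in> Q \<and> (\<forall>q\<in>Q. \<forall>a. \<delta> q a \<in> Q) \<and> F \<subseteq> Q \<and>
     (\<forall>p\<in>Q. \<forall>q\<in>Q. (\<exists>u. dstep_star \<delta> p u = q) \<and> (\<exists>v. dstep_star \<delta> q v = p)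
        \<longrightarrow> (p \<in> F \<longleftrightarrow> q \<in> F))"

definition dba_lang :: "nat \<Rightarrow> (nat \<Rightarrow> 'a \<Rightarrow> nat) \<Rightarrow> nat set \<Rightarrow> 'a word set" where
  "dba_lang q0 \<delta> F = {\<alpha>. dInf \<delta> q0 \<alpha> \<inter> F \<noteq> {}}"

definition weak_dba_recognizable :: "'a word set \<Rightarrow> bool" where
  "weak_dba_recognizable L \<longleftrightarrow>
     (\<exists>Q q0 \<delta> F. weak_dba Q q0 \<delta> F \<and> L = dba_lang q0 \<delta> F)"

definition nba_accepts ::
  "nat set \<Rightarrow> nat set \<Rightarrow> (nat \<times> 'a \<times> nat) set \<Rightarrow> nat set \<Rightarrow> 'a word \<Rightarrow> bool" where
  "nba_accepts Q I \<Delta> F \<alpha> \<longleftrightarrow>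
     (\<exists>r :: nat word. r 0 \<in> I \<and> (\<forall>n. (r n, \<alpha> n, r (Suc n)) \<in> \<Delta>) \<and> limit r \<inter> F \<noteq> {})"

definition omega_regular :: "'a word set \<Rightarrow> bool" where
  "omega_regular L \<longleftrightarrow>
     (\<exists>Q I \<Delta> F. finite Q \<and> I \<subseteq> Q \<and> \<Delta> \<subseteq> Q \<times> UNIV \<times> Q \<and> F \<subseteq> Q \<and>
        L = {\<alpha>. nba_accepts Q I \<Delta> F \<alpha>})"

definition trivial_right_congruence :: "'a word set \<Rightarrow> bool" where
  "trivial_right_congruence D \<longleftrightarrow> (\<forall>(w::'a list) \<alpha>. \<alpha> \<in> D \<longleftrightarrow> w \<frown> \<alpha> \<in> D)"

definition ultimately_periodic :: "'a word \<Rightarrow> bool" where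
  "ultimately_periodic \<alpha> \<longleftrightarrow> (\<exists>u v. v \<noteq> [] \<and> \<alpha> = u \<frown> v\<^sup>\<omega>)"

(* f is given on all pairs, but is only constrained on (S \<union> S\<Sigma>) \<times> E *)
definition obs_table ::
  "'a word set \<Rightarrow> 'a word set \<Rightarrow> 'a list set \<Rightarrow> 'a word set \<Rightarrow> ('a list \<Rightarrow> 'a word \<Rightarrow> bool) \<Rightarrow> bool" where
  "obs_table U D S E f \<longleftrightarrow>
     finite S \<and> [] \<in> S \<and> (\<forall>s\<in>S. \<forall>u v. s = u @ v \<longrightarrow> u \<in> S) \<and>
     finite E \<and> (\<forall>\<alpha>\<in>E. \<forall>k. suffix k \<alpha> \<in> E) \<and> (\<forall>\<alpha>\<in>E. ultimately_periodic \<alpha>) \<and>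
     E \<inter> D = {} \<and>
     (\<forall>s. (s \<in> S \<or> (\<exists>s'\<in>S. \<exists>\<sigma>. s = s' @ [\<sigma>])) \<longrightarrow>
          (\<forall>\<alpha>\<in>E. f s \<alpha> \<longleftrightarrow> s \<frown> \<alpha> \<in> U))"

definition row_eq :: "'a word set \<Rightarrow> ('a list \<Rightarrow> 'a word \<Rightarrow> bool) \<Rightarrow> 'a list \<Rightarrow> 'a list \<Rightarrow> bool" where
  "row_eq E f s t \<longleftrightarrow> (\<forall>\<alpha>\<in>E. f s \<alpha> = f t \<alpha>)"

definition reduced :: "'a list set \<Rightarrow> 'a word set \<Rightarrow> ('a list \<Rightarrow> 'a word \<Rightarrow> bool) \<Rightarrow> bool" where
  "reduced S E f \<longleftrightarrow> (\<forall>s\<in>S. \<forall>t\<in>S. s \<noteq> t \<longrightarrow> \<not> row_eq E f s t)"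

definition closed :: "'a list set \<Rightarrow> 'a word set \<Rightarrow> ('a list \<Rightarrow> 'a word \<Rightarrow> bool) \<Rightarrow> bool" where
  "closed S E f \<longleftrightarrow> (\<forall>s\<in>S. \<forall>\<sigma>. \<exists>t\<in>S. row_eq E f (s @ [\<sigma>]) t)"

definition delta_f ::
  "'a list set \<Rightarrow> 'a word set \<Rightarrow> ('a list \<Rightarrow> 'a word \<Rightarrow> bool) \<Rightarrow> 'a list \<Rightarrow> 'a \<Rightarrow> 'a list" where
  "delta_f S E f s \<sigma> = (THE t. t \<in> S \<and> row_eq E f (s @ [\<sigma>]) t)"

abbreviation delta_f_star where
  "delta_f_star S E f \<equiv> dstep_star (delta_f S E f)"

abbreviation Inf_T where
  "Inf_T S E f \<beta> \<equiv> dInf (delta_f S E f) [] \<beta>"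

definition same_scc ::
  "'a list set \<Rightarrow> 'a word set \<Rightarrow> ('a list \<Rightarrow> 'a word \<Rightarrow> bool) \<Rightarrow> 'a list \<Rightarrow> 'a list \<Rightarrow> bool" where
  "same_scc S E f s t \<longleftrightarrow>
     (\<exists>u. delta_f_star S E f s u = t) \<and> (\<exists>v. delta_f_star S E f t v = s)"

definition marked_yes where
  "marked_yes U S E f q \<longleftrightarrow> (\<exists>s\<in>S. \<exists>e\<in>E. s \<frown> e \<in> U \<and> q \<in> Inf_T S E f (s \<frown> e))"

definition marked_no where
  "marked_no U S E f q \<longleftrightarrow> (\<exists>s\<in>S. \<exists>e\<in>E. s \<frown> e \<notin> U \<and> q \<in> Inf_T S E f (s \<frown> e))"

definition marking_fails where
  "marking_fails U S E f \<longleftrightarrow>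
     (\<exists>s\<in>S. \<exists>t\<in>S. same_scc S E f s t \<and> marked_yes U S E f s \<and> marked_no U S E f t)"

end

theory Submission
  imports Defs
begin

(* A state q marked by a word s1 e (s1 in S, e in E ultimately periodic) lies in the Inf-set of
   the run of T_{S,f} from s1 on e.  Since that run only visits finitely many states, some state s
   is reached at two boundaries of periods of e, so after reading a prefix of e the run cycles
   through s on a word x with x^omega equal to the remaining suffix of e.  Hence
   Inf(s1 e) = Inf(s x^omega) contains both s and q, which are therefore in one SCC.  Because
   closedness and reducedness make every transition of T_{S,f} preserve rows, q' beta is in U
   iff s1 e is, for every state q' of the run and the remaining suffix beta in E; in particular
   f(s, x^omega) says whether s1 e is in U.  Applying this to the two states witnessing the failure
   of the marking gives s and t. *)

lemma dstep_star_append: "dstep_star \<delta> q (u @ v) = dstep_star \<delta> (dstep_star \<delta> q u) v"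
  by (simp add: dstep_star_def)

lemma prefix_add: "prefix (i + k) \<alpha> = prefix i \<alpha> @ prefix k (suffix i \<alpha>)"
proof -
  have "prefix (i + k) \<alpha> = prefix i \<alpha> @ (\<alpha> [i \<rightarrow> i + k])"
    by (rule subsequence_append)
  also have "\<alpha> [i \<rightarrow> i + k] = prefix k (suffix i \<alpha>)"
    using subsequence_prefix_suffix[where i = i and j = "i + k" and w = \<alpha>] by simp
  finally show ?thesis .
qed

lemma drun_suffix: "drun \<delta> q \<alpha> (i + k) = drun \<delta> (drun \<delta> q \<alpha> i) (suffix i \<alpha>) k"
  by (simp add: drun_def prefix_add dstep_star_append)

lemma dInf_suffix: "dInf \<delta> q \<alpha> = dInf \<delta> (drun \<delta> q \<alpha> n) (suffix n \<alpha>)"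
proof -
  have "suffix n (drun \<delta> q \<alpha>) = drun \<delta> (drun \<delta> q \<alpha> n) (suffix n \<alpha>)"
    by (simp add: fun_eq_iff drun_suffix)
  then show ?thesis
    unfolding dInf_def by (metis limit_suffix)
qed

lemma dInf_conc: "dInf \<delta> q (w \<frown> \<alpha>) = dInf \<delta> (dstep_star \<delta> q w) \<alpha>"
proof -
  have "drun \<delta> q (w \<frown> \<alpha>) (length w) = dstep_star \<delta> q w"
    by (simp add: drun_def)
  then show ?thesis
    using dInf_suffix[of \<delta> q "w \<frown> \<alpha>" "length w"] by (simp only: suffix_conc_length)
qed

lemma dInf_reachable:
  assumes "p \<in> dInf \<delta> q \<alpha>" "p' \<in> dInf \<delta> q \<alpha>"
  shows "\<exists>u. dstep_star \<delta> p u = p'"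
proof -
  have "p \<in> range (drun \<delta> q \<alpha>)"
    using limit_in_range assms(1) unfolding dInf_def by (rule subsetD)
  then obtain i where i: "drun \<delta> q \<alpha> i = p"
    by (metis rangeE)
  obtain j where "j > i" "drun \<delta> q \<alpha> j = p'"
    using assms(2) unfolding dInf_def limit_iff_frequent INFM_nat by blast
  then have "drun \<delta> p (suffix i \<alpha>) (j - i) = p'"
    using drun_suffix[of \<delta> q \<alpha> i "j - i"] i by simp
  then show ?thesis
    unfolding drun_def by blast
qed

lemma suffix_iter_mult: "v \<noteq> [] \<Longrightarrow> suffix (k * length v) (v\<^sup>\<omega>) = v\<^sup>\<omega>"
  by (auto simp: fun_eq_iff)

lemma prefix_iter_length: "v \<noteq> [] \<Longrightarrow> prefix (length v) (v\<^sup>\<omega>) = v"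
  by (auto intro: nth_equalityI)

lemma iter_prefix_iter_mult:
  assumes "v \<noteq> []" "0 < k"
  shows "(prefix (k * length v) (v\<^sup>\<omega>))\<^sup>\<omega> = v\<^sup>\<omega>"
proof
  fix i
  have "0 < k * length v"
    using assms by simp
  then show "(prefix (k * length v) (v\<^sup>\<omega>))\<^sup>\<omega> i = v\<^sup>\<omega> i"
    using assms(1) by (simp add: mod_mod_cancel)
qed

lemma drun_iter_loop:
  assumes "x \<noteq> []" "dstep_star \<delta> q x = q"
  shows "drun \<delta> q (x\<^sup>\<omega>) (j * length x) = q"
proof (induction j)
  case 0
  show ?case by (simp add: drun_def dstep_star_def)
next
  case (Suc j)
  have "drun \<delta> q (x\<^sup>\<omega>) (j * length x + length x)
      = drun \<delta> q (suffix (j * length x) (x\<^sup>\<omega>)) (length x)"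
    by (simp only: drun_suffix Suc.IH)
  also have "\<dots> = q"
    using assms by (simp add: suffix_iter_mult prefix_iter_length drun_def)
  finally show ?case by (simp add: add.commute)
qed

lemma loop_in_dInf_iter:
  assumes "x \<noteq> []" "dstep_star \<delta> q x = q"
  shows "q \<in> dInf \<delta> q (x\<^sup>\<omega>)"
  unfolding dInf_def limit_iff_frequent INFM_nat
proof
  fix m
  have "m < Suc m * length x"
    using assms(1) by (cases x) auto
  then show "\<exists>n>m. drun \<delta> q (x\<^sup>\<omega>) n = q"
    using drun_iter_loop[OF assms] by blast
qed

lemma ultimately_periodic_run_loop:
  assumes "finite (range (drun \<delta> q \<alpha>))" "ultimately_periodic \<alpha>"
  obtains n x where "x \<noteq> []" "suffix n \<alpha> = x\<^sup>\<omega>"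
    "dstep_star \<delta> (drun \<delta> q \<alpha> n) x = drun \<delta> q \<alpha> n"
proof -
  obtain u v where v: "v \<noteq> []" and \<alpha>: "\<alpha> = u \<frown> v\<^sup>\<omega>"
    using assms(2) unfolding ultimately_periodic_def by blast
  \<comment> \<open>at the positions \<open>length u + k * length v\<close> the remaining input is always \<open>v\<^sup>\<omega>\<close>\<close>
  define g where "g k = drun \<delta> q \<alpha> (length u + k * length v)" for k
  have "\<not> inj g"
  proof
    assume "inj g"
    moreover have "finite (range g)"
      using assms(1) by (rule finite_subset[rotated]) (auto simp: g_def)
    ultimately show False
      using finite_imageD by blast
  qed
  then obtain a b where ab: "a < b" "g a = g b"
    unfolding inj_def by (metis linorder_neqE_nat)
  define n where "n = length u + a * length v"
  define x where "x = prefix ((b - a) * length v) (v\<^sup>\<omega>)"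
  have suffix_n: "suffix n \<alpha> = v\<^sup>\<omega>"
    using v by (simp add: n_def \<alpha> suffix_iter_mult)
  have "a * length v \<le> b * length v"
    using ab(1) by simp
  then have "drun \<delta> q \<alpha> (n + (b - a) * length v) = drun \<delta> q \<alpha> n"
    using ab(2) by (simp add: g_def n_def diff_mult_distrib)
  moreover have "drun \<delta> q \<alpha> (n + (b - a) * length v) = dstep_star \<delta> (drun \<delta> q \<alpha> n) x"
    unfolding drun_suffix suffix_n by (simp add: drun_def x_def)
  ultimately have loop: "dstep_star \<delta> (drun \<delta> q \<alpha> n) x = drun \<delta> q \<alpha> n"
    by simp
  have "x \<noteq> []"
    using v ab(1) by (simp add: x_def flip: length_greater_0_conv)
  moreover have "suffix n \<alpha> = x\<^sup>\<omega>"
    using v ab(1) unfolding x_def suffix_n by (simp add: iter_prefix_iter_mult)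
  ultimately show ?thesis
    using loop by (rule that)
qed

lemma same_scc_sym: "same_scc S E f p q \<Longrightarrow> same_scc S E f q p"
  unfolding same_scc_def by blast

lemma same_scc_trans: "same_scc S E f p q \<Longrightarrow> same_scc S E f q r \<Longrightarrow> same_scc S E f p r"
  unfolding same_scc_def by (metis dstep_star_append)

locale reduced_closed_table =
  fixes U D :: "'a word set" and S :: "'a list set" and E :: "'a word set"
    and f :: "'a list \<Rightarrow> 'a word \<Rightarrow> bool"
  assumes table: "obs_table U D S E f"
    and table_reduced: "reduced S E f"
    and table_closed: "closed S E f"
begin

lemma finite_S: "finite S"
  using table unfolding obs_table_def by blast

lemma prefix_in_S: "u @ v \<in> S \<Longrightarrow> u \<in> S"
  using table unfolding obs_table_def by blast

lemma suffix_in_E: "e \<in> E \<Longrightarrow> suffix k e \<in> E"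
  using table unfolding obs_table_def by blast

lemma ultimately_periodic_E: "e \<in> E \<Longrightarrow> ultimately_periodic e"
  using table unfolding obs_table_def by blast

lemma f_iff_mem: "s \<in> S \<Longrightarrow> e \<in> E \<Longrightarrow> f s e \<longleftrightarrow> s \<frown> e \<in> U"
  using table unfolding obs_table_def by blast

lemma f_snoc_iff_mem: "s \<in> S \<Longrightarrow> e \<in> E \<Longrightarrow> f (s @ [a]) e \<longleftrightarrow> (s @ [a]) \<frown> e \<in> U"
  using table unfolding obs_table_def by blast

lemma delta_f_unique: "s \<in> S \<Longrightarrow> \<exists>!t. t \<in> S \<and> row_eq E f (s @ [a]) t"
proof -
  assume "s \<in> S"
  then obtain t where t: "t \<in> S" "row_eq E f (s @ [a]) t"
    using table_closed unfolding closed_def by blast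
  moreover have "t' = t" if "t' \<in> S" "row_eq E f (s @ [a]) t'" for t'
    using table_reduced that t unfolding reduced_def row_eq_def by metis
  ultimately show ?thesis
    by blast
qed

lemma delta_f_in_S: "s \<in> S \<Longrightarrow> delta_f S E f s a \<in> S"
  unfolding delta_f_def using theI'[OF delta_f_unique] by blast

lemma row_eq_delta_f: "s \<in> S \<Longrightarrow> row_eq E f (s @ [a]) (delta_f S E f s a)"
  unfolding delta_f_def using theI'[OF delta_f_unique] by blast

lemma delta_f_eqI: "s \<in> S \<Longrightarrow> t \<in> S \<Longrightarrow> row_eq E f (s @ [a]) t \<Longrightarrow> delta_f S E f s a = t"
  unfolding delta_f_def using the1_equality[OF delta_f_unique] by blast

lemma delta_f_star_in_S: "s \<in> S \<Longrightarrow> delta_f_star S E f s w \<in> S"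
  by (induction w arbitrary: s) (simp_all add: dstep_star_def delta_f_in_S)

lemma delta_f_star_access: "s \<in> S \<Longrightarrow> delta_f_star S E f [] s = s"
proof (induction s rule: rev_induct)
  case Nil
  show ?case by (simp add: dstep_star_def)
next
  case (snoc a s)
  then have "s \<in> S"
    by (blast intro: prefix_in_S)
  then show ?case
    using snoc by (simp add: dstep_star_def delta_f_eqI row_eq_def)
qed

lemma Inf_T_access: "s \<in> S \<Longrightarrow> Inf_T S E f (s \<frown> \<alpha>) = dInf (delta_f S E f) s \<alpha>"
  by (simp add: dInf_conc delta_f_star_access)

lemma delta_f_mem_iff:
  assumes "q \<in> S" "e \<in> E"
  shows "(q @ [a]) \<frown> e \<in> U \<longleftrightarrow> delta_f S E f q a \<frown> e \<in> U"
proof -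
  have "(q @ [a]) \<frown> e \<in> U \<longleftrightarrow> f (q @ [a]) e"
    using f_snoc_iff_mem[OF assms] by simp
  also have "\<dots> \<longleftrightarrow> f (delta_f S E f q a) e"
    using row_eq_delta_f[OF assms(1)] assms(2) unfolding row_eq_def by blast
  also have "\<dots> \<longleftrightarrow> delta_f S E f q a \<frown> e \<in> U"
    using f_iff_mem[OF delta_f_in_S[OF assms(1)] assms(2)] .
  finally show ?thesis .
qed

lemma delta_f_star_mem_iff:
  "q \<in> S \<Longrightarrow> w \<frown> e \<in> E \<Longrightarrow> q \<frown> (w \<frown> e) \<in> U \<longleftrightarrow> delta_f_star S E f q w \<frown> e \<in> U"
proof (induction w arbitrary: q)
  case Nil
  show ?case by (simp add: dstep_star_def)
next
  case (Cons a w)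
  have "w \<frown> e = suffix (length [a]) ((a # w) \<frown> e)"
    by (metis conc_conc append_Cons append_Nil suffix_conc_length)
  then have "w \<frown> e \<in> E"
    by (metis suffix_in_E Cons.prems(2))
  then have "q \<frown> ((a # w) \<frown> e) \<in> U \<longleftrightarrow> delta_f S E f q a \<frown> (w \<frown> e) \<in> U"
    using delta_f_mem_iff[OF Cons.prems(1)] by simp
  also have "\<dots> \<longleftrightarrow> delta_f_star S E f (delta_f S E f q a) w \<frown> e \<in> U"
    using Cons.IH[OF delta_f_in_S[OF Cons.prems(1)] \<open>w \<frown> e \<in> E\<close>] .
  also have "delta_f_star S E f (delta_f S E f q a) w = delta_f_star S E f q (a # w)"
    by (simp add: dstep_star_def)
  finally show ?case .
qed

lemma marked_state_loop:
  assumes "s\<^sub>1 \<in> S" "e \<in> E" "q \<in> Inf_T S E f (s\<^sub>1 \<frown> e)"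
  obtains s x where "s \<in> S" "x \<noteq> []" "x\<^sup>\<omega> \<in> E" "s \<in> Inf_T S E f (s \<frown> x\<^sup>\<omega>)"
    "f s (x\<^sup>\<omega>) \<longleftrightarrow> s\<^sub>1 \<frown> e \<in> U" "same_scc S E f s q"
proof -
  let ?\<delta> = "delta_f S E f"
  have run_in_S: "range (drun ?\<delta> s\<^sub>1 e) \<subseteq> S"
    using assms(1) by (auto simp: drun_def delta_f_star_in_S)
  then have "finite (range (drun ?\<delta> s\<^sub>1 e))"
    using finite_S by (rule finite_subset)
  then obtain n x where x: "x \<noteq> []" "suffix n e = x\<^sup>\<omega>"
    and loop: "dstep_star ?\<delta> (drun ?\<delta> s\<^sub>1 e n) x = drun ?\<delta> s\<^sub>1 e n"
    using ultimately_periodic_E[OF assms(2)] by (rule ultimately_periodic_run_loop)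
  define s where "s = drun ?\<delta> s\<^sub>1 e n"
  have "s \<in> S"
    using run_in_S by (auto simp: s_def)
  have "x\<^sup>\<omega> \<in> E"
    using suffix_in_E[OF assms(2), of n] x(2) by simp
  have Inf_eq: "Inf_T S E f (s\<^sub>1 \<frown> e) = dInf ?\<delta> s (x\<^sup>\<omega>)"
    unfolding Inf_T_access[OF assms(1)] s_def x(2)[symmetric] by (rule dInf_suffix)
  have s_dInf: "s \<in> dInf ?\<delta> s (x\<^sup>\<omega>)"
    unfolding s_def using loop_in_dInf_iter[OF x(1) loop] .
  then have s_Inf: "s \<in> Inf_T S E f (s \<frown> x\<^sup>\<omega>)"
    unfolding Inf_T_access[OF \<open>s \<in> S\<close>] .
  have scc: "same_scc S E f s q"
    using dInf_reachable[OF _ assms(3)[unfolded Inf_eq]]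
      dInf_reachable[OF assms(3)[unfolded Inf_eq]] s_dInf
    unfolding same_scc_def by blast
  have row: "f s (x\<^sup>\<omega>) \<longleftrightarrow> s\<^sub>1 \<frown> e \<in> U"
  proof -
    have e: "prefix n e \<frown> x\<^sup>\<omega> = e"
      using prefix_suffix[of e n] x(2) by metis
    have in_E: "prefix n e \<frown> x\<^sup>\<omega> \<in> E"
      unfolding e by (rule assms(2))
    have run: "delta_f_star S E f s\<^sub>1 (prefix n e) = s"
      by (simp only: s_def drun_def)
    have "s\<^sub>1 \<frown> e \<in> U \<longleftrightarrow> s \<frown> x\<^sup>\<omega> \<in> U"
      using delta_f_star_mem_iff[OF assms(1) in_E] by (simp only: e run)
    then show ?thesis
      using f_iff_mem[OF \<open>s \<in> S\<close> \<open>x\<^sup>\<omega> \<in> E\<close>] by blast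
  qed
  show ?thesis
    by (rule that[OF \<open>s \<in> S\<close> x(1) \<open>x\<^sup>\<omega> \<in> E\<close> s_Inf row scc])
qed

end

theorem lemma7:
  fixes U D :: "('a::finite) word set"
    and S :: "'a list set" and E :: "'a word set"
    and f :: "'a list \<Rightarrow> 'a word \<Rightarrow> bool"
  assumes "weak_dba_recognizable U"
    and "omega_regular D" and "trivial_right_congruence D"
    and "obs_table U D S E f"
    and "reduced S E f" and "closed S E f"
    and "marking_fails U S E f"
  shows "\<exists>s\<in>S. \<exists>t\<in>S. \<exists>z w x y.
           delta_f_star S E f [] (s @ z) = t \<and> delta_f_star S E f [] (t @ w) = s \<and>
           x \<noteq> [] \<and> y \<noteq> [] \<and> x\<^sup>\<omega> \<in> E \<and> y\<^sup>\<omega> \<in> E \<and>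
           s \<in> Inf_T S E f (s \<frown> x\<^sup>\<omega>) \<and> t \<in> Inf_T S E f (t \<frown> y\<^sup>\<omega>) \<and>
           f s (x\<^sup>\<omega>) \<and> \<not> f t (y\<^sup>\<omega>)"
proof -
  interpret reduced_closed_table U D S E f
    using assms(4-6) by unfold_locales
  obtain s\<^sub>0 t\<^sub>0 where scc\<^sub>0: "same_scc S E f s\<^sub>0 t\<^sub>0"
    and "marked_yes U S E f s\<^sub>0" "marked_no U S E f t\<^sub>0"
    using assms(7) unfolding marking_fails_def by blast
  then obtain s\<^sub>1 e\<^sub>1 s\<^sub>2 e\<^sub>2
    where yes: "s\<^sub>1 \<in> S" "e\<^sub>1 \<in> E" "s\<^sub>1 \<frown> e\<^sub>1 \<in> U" "s\<^sub>0 \<in> Inf_T S E f (s\<^sub>1 \<frown> e\<^sub>1)"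
      and no: "s\<^sub>2 \<in> S" "e\<^sub>2 \<in> E" "s\<^sub>2 \<frown> e\<^sub>2 \<notin> U" "t\<^sub>0 \<in> Inf_T S E f (s\<^sub>2 \<frown> e\<^sub>2)"
    unfolding marked_yes_def marked_no_def by blast
  obtain s x where s: "s \<in> S" "x \<noteq> []" "x\<^sup>\<omega> \<in> E" "s \<in> Inf_T S E f (s \<frown> x\<^sup>\<omega>)" "f s (x\<^sup>\<omega>)"
    and "same_scc S E f s s\<^sub>0"
    using marked_state_loop[OF yes(1,2,4)] yes(3) by blast
  obtain t y where t: "t \<in> S" "y \<noteq> []" "y\<^sup>\<omega> \<in> E" "t \<in> Inf_T S E f (t \<frown> y\<^sup>\<omega>)" "\<not> f t (y\<^sup>\<omega>)"
    and "same_scc S E f t t\<^sub>0"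
    using marked_state_loop[OF no(1,2,4)] no(3) by blast
  have "same_scc S E f s t"
    using \<open>same_scc S E f s s\<^sub>0\<close> scc\<^sub>0 \<open>same_scc S E f t t\<^sub>0\<close> same_scc_sym same_scc_trans
    by metis
  then obtain z w where "delta_f_star S E f s z = t" "delta_f_star S E f t w = s"
    unfolding same_scc_def by blast
  then have "delta_f_star S E f [] (s @ z) = t" "delta_f_star S E f [] (t @ w) = s"
    using s(1) t(1) by (simp_all add: dstep_star_append delta_f_star_access)
  then show ?thesis
    using s t by blast
qed

end
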